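(* Let $f:2^N\to\mathbb R_{\ge0}$ be monotone submodular, $|N|=n$, $1\le k\le n$, and $S^\star\in\arg\max_{|T|\le k}f(T)$. Given at least $n\log n$ samples, each a uniformly random subset of $N$ of size $k$ (drawn independently), the sample $S$ of largest value satisfies $f(S)\ge f(S^\star)/k$ with high probability (failure probability polynomially small in $n$).
   Context: $f$ monotone: $f(A)\le f(B)$ for $A\subseteq B$; submodular: $f(A\cup\{e\})-f(A)\ge f(B\cup\{e\})-f(B)$ for $A\subseteq B$. *)

theory Defs
  imports "HOL-Probability.Probability"
begin

definition monotone_setfun :: "'a set \<Rightarrow> ('a set \<Rightarrow> real) \<Rightarrow> bool" where
  "monotone_setfun N f \<longleftrightarrow> (\<forall>A B. A \<subseteq> B \<and> B \<subseteq> N \<longrightarrow> f A \<le> f B)"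

definition submodular_setfun :: "'a set \<Rightarrow> ('a set \<Rightarrow> real) \<Rightarrow> bool" where
  "submodular_setfun N f \<longleftrightarrow>
     (\<forall>A B e. A \<subseteq> B \<and> B \<subseteq> N \<and> e \<in> N \<longrightarrow>
        f (A \<union> {e}) - f A \<ge> f (B \<union> {e}) - f B)"

definition ksubsets :: "'a set \<Rightarrow> nat \<Rightarrow> 'a set set" where
  "ksubsets N k = {T. T \<subseteq> N \<and> card T = k}"

definition samples :: "'a set \<Rightarrow> nat \<Rightarrow> nat \<Rightarrow> 'a set list pmf" where
  "samples N k m = replicate_pmf m (pmf_of_set (ksubsets N k))"

definition best_value :: "('a set \<Rightarrow> real) \<Rightarrow> 'a set list \<Rightarrow> real" where
  "best_value f xs = Max (f ` set xs)"

end

theory Submission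
  imports Defs
begin

text \<open>Some element e of N forces value f(S*)/k: by subadditivity a best singleton of S* carries at
least the average f(S*)/|S*| \<ge> f(S*)/k, and by monotonicity so does every set containing it.
A uniform k-subset misses e with probability 1 - k/n \<le> 1 - 1/n, so the best of m samples
stays below f(S*)/k with probability at most (1 - 1/n)^m \<le> exp(-m/n) \<le> 1/n.\<close>

lemma emeasure_replicate_pmf_lists:
  "emeasure (measure_pmf (replicate_pmf m p)) (lists B) = emeasure (measure_pmf p) B ^ m"
proof (induction m)
  case 0
  then show ?case by simp
next
  case (Suc m)
  have indicator_lists_Cons:
    "indicator (lists B) (x # xs) = indicator B x * (indicator (lists B) xs :: ennreal)" for x xs
    by (auto simp: indicator_def)
  have "emeasure (measure_pmf (replicate_pmf (Suc m) p)) (lists B)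
      = (\<integral>\<^sup>+ x. indicator B x * emeasure (measure_pmf p) B ^ m \<partial>measure_pmf p)"
    by (simp add: indicator_lists_Cons nn_integral_cmult Suc.IH[symmetric])
  also have "\<dots> = emeasure (measure_pmf p) B ^ Suc m"
    by (simp add: nn_integral_multc mult.commute)
  finally show ?case .
qed

lemma measure_replicate_pmf_lists:
  "measure_pmf.prob (replicate_pmf m p) (lists B) = measure_pmf.prob p B ^ m"
  using emeasure_replicate_pmf_lists[of m p B]
  by (simp add: measure_pmf.emeasure_eq_measure ennreal_power)

lemma prob_best_value_less:
  "measure_pmf.prob (replicate_pmf m p) {xs. best_value f xs < c}
     \<le> measure_pmf.prob p {T. f T < c} ^ m"
proof -
  have "{xs. best_value f xs < c} \<subseteq> lists {T. f T < c}"
    by (auto simp: best_value_def intro: le_less_trans[OF Max_ge])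
  then show ?thesis
    by (metis measure_replicate_pmf_lists measure_pmf.finite_measure_mono sets_measure_pmf UNIV_I)
qed

lemma monotone_setfunD:
  "monotone_setfun N f \<Longrightarrow> A \<subseteq> B \<Longrightarrow> B \<subseteq> N \<Longrightarrow> f A \<le> f B"
  unfolding monotone_setfun_def by blast

lemma submodular_setfun_subadditive:
  assumes "submodular_setfun N f" "f {} \<ge> 0" "finite S" "S \<noteq> {}" "S \<subseteq> N"
  shows "f S \<le> (\<Sum>e\<in>S. f {e})"
  using assms(3-5)
proof (induction S rule: finite_ne_induct)
  case (singleton x)
  then show ?case by simp
next
  case (insert x F)
  have "f (F \<union> {x}) - f F \<le> f ({} \<union> {x}) - f {}"
    using assms(1) insert.prems unfolding submodular_setfun_def by blast
  then show ?case using insert assms(2) by simp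
qed

lemma submodular_setfun_singleton_ge_average:
  assumes "submodular_setfun N f" "f {} \<ge> 0" "finite S" "S \<noteq> {}" "S \<subseteq> N"
  obtains e where "e \<in> S" "f S / real (card S) \<le> f {e}"
proof (rule ccontr)
  assume "\<not> thesis"
  then have "\<forall>e\<in>S. f {e} < f S / real (card S)"
    using that by force
  then have "(\<Sum>e\<in>S. f {e}) < (\<Sum>e\<in>S. f S / real (card S))"
    using assms(3,4) by (intro sum_strict_mono) auto
  also have "\<dots> = f S"
    using assms(3,4) by simp
  finally show False
    using submodular_setfun_subadditive[OF assms] by simp
qed

lemma monotone_submodular_forcing_element:
  assumes "monotone_setfun N f" "submodular_setfun N f" "\<forall>T. T \<subseteq> N \<longrightarrow> f T \<ge> 0"
    and "finite N" "N \<noteq> {}" "S \<subseteq> N" "card S \<le> k" "1 \<le> k"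
  obtains e where "e \<in> N" "\<And>T. T \<subseteq> N \<Longrightarrow> e \<in> T \<Longrightarrow> f S / real k \<le> f T"
proof (cases "S = {}")
  case True
  obtain e where "e \<in> N"
    using assms(5) by blast
  moreover have "f S / real k \<le> f T" if "T \<subseteq> N" for T
  proof -
    have "f S \<ge> 0"
      using assms(3,6) by blast
    then have "f S / real k \<le> f S"
      using divide_left_mono[of 1 "real k" "f S"] assms(8) by simp
    moreover have "f {} \<le> f T"
      using monotone_setfunD[OF assms(1) _ that] by simp
    ultimately show ?thesis
      using True by simp
  qed
  ultimately show ?thesis
    using that by blast
next
  case False
  have "finite S"
    using assms(4,6) finite_subset by blast
  moreover have "f {} \<ge> 0"
    using assms(3) by simp
  ultimately obtain e where e: "e \<in> S" "f S / real (card S) \<le> f {e}"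
    using submodular_setfun_singleton_ge_average[OF assms(2)] False assms(6) by blast
  have "f S / real k \<le> f S / real (card S)"
    using divide_left_mono[of "real (card S)" "real k" "f S"] assms(3,6,7,8) False \<open>finite S\<close>
    by (simp add: card_gt_0_iff)
  also have "\<dots> \<le> f {e}"
    using e(2) .
  finally have e_value: "f S / real k \<le> f {e}" .
  show ?thesis
  proof (rule that)
    show "e \<in> N"
      using e(1) assms(6) by blast
    fix T assume "T \<subseteq> N" "e \<in> T"
    then have "f {e} \<le> f T"
      using monotone_setfunD[OF assms(1), of "{e}" T] by simp
    then show "f S / real k \<le> f T"
      using e_value by linarith
  qed
qed

lemma finite_ksubsets: "finite N \<Longrightarrow> finite (ksubsets N k)"
  unfolding ksubsets_def by simp

lemma ksubsets_nonempty:
  assumes "k \<le> card N"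
  shows "ksubsets N k \<noteq> {}"
proof -
  obtain T where "T \<subseteq> N" "card T = k"
    using obtain_subset_with_card_n[OF assms] by metis
  then show ?thesis
    unfolding ksubsets_def by blast
qed

lemma prob_ksubset_avoids:
  assumes "finite N" "e \<in> N" "k \<le> card N"
  shows "measure_pmf.prob (pmf_of_set (ksubsets N k)) {T. e \<notin> T}
           = real (card N - k) / real (card N)"
proof -
  define n where "n = card N"
  have card_K: "card (ksubsets N k) = n choose k"
    unfolding ksubsets_def n_def using n_subsets[OF assms(1)] by simp
  have "ksubsets N k \<inter> {T. e \<notin> T} = ksubsets (N - {e}) k"
    unfolding ksubsets_def by auto
  then have card_avoid: "card (ksubsets N k \<inter> {T. e \<notin> T}) = (n - 1) choose k"
    unfolding ksubsets_def n_def using n_subsets[of "N - {e}" k] assms(1,2) by simp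
  have "measure_pmf.prob (pmf_of_set (ksubsets N k)) {T. e \<notin> T}
      = real ((n - 1) choose k) / real (n choose k)"
    using measure_pmf_of_set[OF ksubsets_nonempty[OF assms(3)] finite_ksubsets[OF assms(1)]]
      card_K card_avoid by simp
  also have "\<dots> = real (n - k) / real n"
  proof -
    have "real (n - k) * real (n choose k) = real n * real ((n - 1) choose k)"
      using binomial_absorb_comp[of n k] by (metis of_nat_mult)
    moreover have "n choose k > 0" "n > 0"
      using assms n_def card_gt_0_iff by auto
    ultimately show ?thesis
      by (simp add: frac_eq_eq)
  qed
  finally show ?thesis
    unfolding n_def .
qed

lemma prob_ksubset_value_less:
  fixes f :: "'a set \<Rightarrow> 'b::linorder"
  assumes "finite N" "1 \<le> k" "k \<le> card N" "e \<in> N"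
    and forced: "\<And>T. T \<subseteq> N \<Longrightarrow> e \<in> T \<Longrightarrow> c \<le> f T"
  shows "measure_pmf.prob (pmf_of_set (ksubsets N k)) {T. f T < c} \<le> 1 - 1 / real (card N)"
proof -
  define p where "p = pmf_of_set (ksubsets N k)"
  have support: "set_pmf p = ksubsets N k"
    unfolding p_def using ksubsets_nonempty[OF assms(3)] finite_ksubsets[OF assms(1)] by simp
  have below_avoids: "{T. f T < c} \<inter> set_pmf p \<subseteq> {T. e \<notin> T}"
  proof safe
    fix T assume "f T < c" "T \<in> set_pmf p" "e \<in> T"
    then have "T \<subseteq> N"
      by (simp add: support ksubsets_def)
    then have "c \<le> f T"
      using \<open>e \<in> T\<close> by (rule forced)
    with \<open>f T < c\<close> show False
      by (simp add: not_le[symmetric])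
  qed
  have "measure_pmf.prob p {T. f T < c} = measure_pmf.prob p ({T. f T < c} \<inter> set_pmf p)"
    by (simp add: measure_Int_set_pmf)
  also have "\<dots> \<le> measure_pmf.prob p {T. e \<notin> T}"
    using below_avoids by (intro measure_pmf.finite_measure_mono) auto
  also have "\<dots> = real (card N - k) / real (card N)"
    unfolding p_def using prob_ksubset_avoids[OF assms(1,4,3)] .
  also have "\<dots> \<le> 1 - 1 / real (card N)"
    using assms(2,3) by (simp add: divide_simps of_nat_diff)
  finally show ?thesis
    unfolding p_def .
qed

lemma one_minus_inverse_power_le:
  assumes "n \<ge> 1" "real m \<ge> real n * ln (real n)"
  shows "(1 - 1 / real n) ^ m \<le> 1 / real n"
proof -
  have "(1 - 1 / real n) ^ m \<le> exp (- 1 / real n) ^ m"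
    using assms(1) exp_ge_add_one_self[of "- 1 / real n"] by (intro power_mono) auto
  also have "\<dots> = exp (- real m / real n)"
    by (simp add: exp_of_nat_mult[symmetric])
  also have "\<dots> \<le> exp (- ln (real n))"
    using assms by (simp add: field_simps)
  also have "\<dots> = 1 / real n"
    using assms(1) by (simp add: exp_minus inverse_eq_divide)
  finally show ?thesis .
qed

theorem lemma24:
  fixes N :: "'a set" and f :: "'a set \<Rightarrow> real" and k m :: nat and Sstar :: "'a set"
  assumes "finite N"
    and "\<forall>T. T \<subseteq> N \<longrightarrow> f T \<ge> 0"
    and "monotone_setfun N f"
    and "submodular_setfun N f"
    and "1 \<le> k" and "k \<le> card N"
    and "Sstar \<subseteq> N" and "card Sstar \<le> k"
    and "\<forall>T. T \<subseteq> N \<and> card T \<le> k \<longrightarrow> f T \<le> f Sstar"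
    and "real m \<ge> real (card N) * ln (real (card N))"
  shows "measure_pmf.prob (samples N k m)
           {xs. best_value f xs < f Sstar / real k} \<le> 1 / real (card N)"
proof -
  define n where "n = card N"
  define p where "p = pmf_of_set (ksubsets N k)"
  define c where "c = f Sstar / real k"
  have "n \<ge> 1" "N \<noteq> {}"
    using assms(5,6) n_def by auto
  then obtain e where e: "e \<in> N" "\<And>T. T \<subseteq> N \<Longrightarrow> e \<in> T \<Longrightarrow> c \<le> f T"
    using monotone_submodular_forcing_element[OF assms(3,4,2,1) _ assms(7,8,5)]
    unfolding c_def by blast
  have "measure_pmf.prob p {T. f T < c} \<le> 1 - 1 / real n"
    unfolding p_def n_def by (rule prob_ksubset_value_less[OF assms(1,5,6) e])
  then have "measure_pmf.prob p {T. f T < c} ^ m \<le> (1 - 1 / real n) ^ m"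
    by (intro power_mono) simp_all
  then have "measure_pmf.prob (samples N k m) {xs. best_value f xs < c} \<le> (1 - 1 / real n) ^ m"
    using prob_best_value_less[of m p f c] unfolding samples_def p_def by linarith
  also have "\<dots> \<le> 1 / real n"
    using one_minus_inverse_power_le[OF \<open>n \<ge> 1\<close>] assms(10) by (simp add: n_def)
  finally show ?thesis
    unfolding n_def c_def .
qed

end
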